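(* Let $a,b,d$ be positive integers with $d$ not a perfect square, $\alpha=a+b^2\sqrt d$, $N_\alpha=a^2-b^4d$, and $t,u$ positive integers with $\varepsilon=(t+u\sqrt d)/2$ a unit of the ring of integers of $\mathbb{Q}(\sqrt d)$; define $x_k+y_k\sqrt d=\alpha\varepsilon^{2k}$ for $k\in\mathbb{Z}$. Suppose $k\ne0$, $\gcd(a,b)=1$, $N_\alpha<0$, and $x_k,y_k$ are both integers. Let $t'=\operatorname{core}(N_\alpha)$, $u_1=2x_k$, $u_2=\pm2\sqrt{N_\alpha/\operatorname{core}(N_\alpha)}$, and let $g$ be defined from $(t',u_1,u_2)$ as below. Then $g^2/\gcd(a^2,db^4)=2^m$ for some integer $m\ge0$.
   Context: $\operatorname{core}(n)$ is the unique squarefree integer with $n/\operatorname{core}(n)$ a perfect square. Given $t',u_1,u_2$: $g_1=\gcd(u_1,u_2)$, $g_2=\gcd(u_1/g_1,t')$ (positive gcds); $g_3=1$ if $t'\equiv1\pmod4$ and $(u_1-u_2)/g_1$ is even, $g_3=2$ if $t'\equiv3\pmod4$ and $(u_1-u_2)/g_1$ is even, $g_3=4$ otherwise; $g=g_1\sqrt{g_2/g_3}$. *)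

theory Defs
  imports Complex_Main "HOL-Computational_Algebra.Squarefree"
begin

text \<open>core n: the unique squarefree integer c with n / c a perfect square
  (i.e. n = c * s^2 for some integer s). Meaningful for n \<noteq> 0.\<close>
definition core :: "int \<Rightarrow> int" where
  "core n = (THE c. squarefree c \<and> (\<exists>s::int. n = c * s^2))"

definition g1_of :: "int \<Rightarrow> int \<Rightarrow> int" where
  "g1_of u1 u2 = gcd u1 u2"

definition g2_of :: "int \<Rightarrow> int \<Rightarrow> int \<Rightarrow> int" where
  "g2_of t' u1 u2 = gcd (u1 div g1_of u1 u2) t'"

definition g3_of :: "int \<Rightarrow> int \<Rightarrow> int \<Rightarrow> int" where
  "g3_of t' u1 u2 =
     (if t' mod 4 = 1 \<and> even ((u1 - u2) div g1_of u1 u2) then 1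
      else if t' mod 4 = 3 \<and> even ((u1 - u2) div g1_of u1 u2) then 2
      else 4)"

definition g_of :: "int \<Rightarrow> int \<Rightarrow> int \<Rightarrow> real" where
  "g_of t' u1 u2 = real_of_int (g1_of u1 u2) *
     sqrt (real_of_int (g2_of t' u1 u2) / real_of_int (g3_of t' u1 u2))"

end

theory Submission
  imports Defs
begin

(* Write eps^(2k) = (T + U sqrt d)/2 with T^2 - d U^2 = 4 (and T, U even if d is even).  Then
   2x = T a + U d b^2 and 2y = U a + T b^2, and conversely 2a = T x - U d y, 2b^2 = T y - U x,
   so each of gcd(x^2, d y^2) and gcd(a^2, d b^4) divides 4 times the other; they are equal when d
   is even, and gcd(a^2, d b^4) is odd when d is odd.  Hence gcd(x^2, d y^2) = gcd(a^2, d b^4) q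
   with q dividing 4.  As t' is squarefree and N = t' s^2 = x^2 - d y^2, a comparison of
   p-adic valuations gives g1^2 g2 = 4 gcd(x^2, N) = 4 gcd(x^2, d y^2), so
   g^2 / gcd(a^2, d b^4) = (4 / g3) q divides 16. *)

lemma sqrt_nonsquare_irrational:
  fixes d :: int
  assumes "d > 0" "\<nexists>r::int. d = r^2"
  shows "sqrt (real_of_int d) \<notin> \<rat>"
proof
  assume "sqrt (real_of_int d) \<in> \<rat>"
  then obtain A B :: int where AB: "B > 0" "coprime A B" "sqrt (real_of_int d) = of_int A / of_int B"
    by (rule Rats_cases')
  then have "real_of_int d = (of_int A / of_int B)^2"
    using assms(1) by (metis of_int_0_less_iff less_imp_le real_sqrt_pow2)
  then have "real_of_int (d * B^2) = real_of_int (A^2)"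
    using AB(1) by (simp add: field_simps)
  then have AdB: "A^2 = d * B^2"
    by (simp only: of_int_eq_iff)
  have "is_unit (B^2)"
    using AB(2) AdB by (metis coprime_commute coprime_power_left_iff coprime_power_right_iff
        coprime_absorb_right dvd_triv_right)
  then have "B = 1"
    using AB(1) by (auto simp add: power2_eq_1_iff)
  then show False
    using AdB assms(2) by auto
qed

lemma int_plus_sqrt_nonsquare_eq_iff:
  fixes d P Q P' Q' :: int
  assumes "d > 0" "\<nexists>r::int. d = r^2"
  shows "of_int P + of_int Q * sqrt (of_int d) = of_int P' + of_int Q' * sqrt (of_int d)
           \<longleftrightarrow> P = P' \<and> Q = Q'"
proof
  assume eq: "of_int P + of_int Q * sqrt (of_int d) = of_int P' + of_int Q' * sqrt (of_int d)"
  show "P = P' \<and> Q = Q'"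
  proof (cases "Q = Q'")
    case False
    then have "sqrt (of_int d) = of_int (P' - P) / of_int (Q - Q')"
      using eq by (simp add: field_simps)
    then have "sqrt (of_int d) \<in> \<rat>"
      by simp
    then show ?thesis
      using sqrt_nonsquare_irrational[OF assms] by blast
  qed (use eq in simp)
qed simp

lemma mult_int_plus_root:
  fixes r :: real
  assumes "r * r = of_int d"
  shows "(of_int T1 + of_int U1 * r) * (of_int T2 + of_int U2 * r)
           = of_int (T1 * T2 + d * U1 * U2) + of_int (T1 * U2 + T2 * U1) * r"
proof -
  have "(of_int T1 + of_int U1 * r) * (of_int T2 + of_int U2 * r)
          = of_int T1 * of_int T2 + of_int U1 * of_int U2 * (r * r) + (of_int T1 * of_int U2 + of_int T2 * of_int U1) * r"
    by (simp add: algebra_simps)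
  then show ?thesis
    unfolding assms by simp
qed

text \<open>The norm-one elements \<open>(T + U\<surd>d)/2\<close>, required to lie in \<open>\<int>[\<surd>d]\<close> when \<open>d\<close> is even.
  Without that requirement the \<open>2\<close>-parts of the gcds compared below would only be determined up to
  a factor \<open>4\<close>.\<close>

definition half_unit :: "int \<Rightarrow> real \<Rightarrow> bool" where
  "half_unit d z \<longleftrightarrow> (\<exists>T U. T^2 - d * U^2 = 4 \<and> (even d \<longrightarrow> even T \<and> even U) \<and>
                         z = (of_int T + of_int U * sqrt (of_int d)) / 2)"

lemma half_unit_1: "half_unit d 1"
  unfolding half_unit_def by (intro exI[of _ 2] exI[of _ 0]) simp

lemma half_unit_mult:
  assumes "d \<ge> 0" "half_unit d z" "half_unit d w"
  shows "half_unit d (z * w)"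
proof -
  obtain T1 U1 T2 U2 where
    n1: "T1^2 - d * U1^2 = 4" and e1: "even d \<longrightarrow> even T1 \<and> even U1"
    and z: "z = (of_int T1 + of_int U1 * sqrt (of_int d)) / 2"
    and n2: "T2^2 - d * U2^2 = 4" and e2: "even d \<longrightarrow> even T2 \<and> even U2"
    and w: "w = (of_int T2 + of_int U2 * sqrt (of_int d)) / 2"
    using assms(2,3) unfolding half_unit_def by blast
  have "even (T1^2 - d * U1^2)" "even (T2^2 - d * U2^2)"
    using n1 n2 by simp_all
  then have "even T1 \<longleftrightarrow> even (d * U1)" "even T2 \<longleftrightarrow> even (d * U2)"
    by (auto simp: power2_eq_square)
  then have "even (T1 * T2 + d * U1 * U2)" "even (T1 * U2 + T2 * U1)"
    by auto
  then obtain T U where T: "2 * T = T1 * T2 + d * U1 * U2" and U: "2 * U = T1 * U2 + T2 * U1"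
    by (metis evenE)
  have "4 * (T^2 - d * U^2) = (2 * T)^2 - d * (2 * U)^2"
    by (simp add: power2_eq_square algebra_simps)
  also have "\<dots> = (T1^2 - d * U1^2) * (T2^2 - d * U2^2)"
    unfolding T U by (simp add: power2_eq_square algebra_simps)
  finally have norm: "T^2 - d * U^2 = 4"
    using n1 n2 by simp
  have parity: "even T \<and> even U" if "even d"
  proof -
    obtain T1' U1' T2' U2' where "T1 = 2 * T1'" "U1 = 2 * U1'" "T2 = 2 * T2'" "U2 = 2 * U2'"
      using e1 e2 \<open>even d\<close> by (meson evenE)
    then have "2 * T = 2 * (2 * (T1' * T2' + d * U1' * U2'))" "2 * U = 2 * (2 * (T1' * U2' + T2' * U1'))"
      using T U by (simp_all add: algebra_simps)
    then show ?thesis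
      by (metis dvd_triv_left mult_left_cancel zero_neq_numeral)
  qed
  have "z * w = (of_int (2 * T) + of_int (2 * U) * sqrt (of_int d)) / 4"
    unfolding z w T U using mult_int_plus_root[of "sqrt (of_int d)" d] assms(1) by simp
  then show ?thesis
    unfolding half_unit_def using norm parity by (intro exI[of _ T] exI[of _ U]) simp
qed

lemma half_unit_inverse:
  assumes "d \<ge> 0" "half_unit d z"
  shows "half_unit d (inverse z)"
proof -
  obtain T U where norm: "T^2 - d * U^2 = 4" and parity: "even d \<longrightarrow> even T \<and> even U"
    and z: "z = (of_int T + of_int U * sqrt (of_int d)) / 2"
    using assms(2) unfolding half_unit_def by blast
  have "z * ((of_int T + of_int (- U) * sqrt (of_int d)) / 2) = of_int (T^2 - d * U^2) / 4"
    unfolding z using mult_int_plus_root[of "sqrt (of_int d)" d T U T "- U"] assms(1)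
    by (simp add: power2_eq_square algebra_simps)
  then have "inverse z = (of_int T + of_int (- U) * sqrt (of_int d)) / 2"
    using norm by (intro inverse_unique) simp
  then show ?thesis
    unfolding half_unit_def using norm parity by (intro exI[of _ T] exI[of _ "- U"]) simp
qed

lemma half_unit_power:
  assumes "d \<ge> 0" "half_unit d z"
  shows "half_unit d (z ^ n)"
  by (induction n) (simp_all add: half_unit_1 half_unit_mult assms)

lemma half_unit_power_int:
  assumes "d \<ge> 0" "half_unit d z"
  shows "half_unit d (z powi k)"
  unfolding power_int_def using assms by (simp add: half_unit_power half_unit_inverse)

lemma half_unit_unit_square:
  fixes d t u :: int
  assumes "d \<ge> 0" "t^2 - d * u^2 = 4 \<or> t^2 - d * u^2 = -4"
  shows "half_unit d (((of_int t + of_int u * sqrt (of_int d)) / 2)^2)"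
proof -
  have "d * u^2 = t^2 - 4 * 1 \<or> d * u^2 = t^2 - 4 * (- 1)"
    using assms(2) by auto
  then obtain \<sigma> :: int where \<sigma>: "d * u^2 = t^2 - 4 * \<sigma>" "\<sigma>^2 = 1"
    by (metis one_power2 power2_minus)
  define T where "T = t^2 - 2 * \<sigma>"
  define U where "U = t * u"
  have "T^2 - d * U^2 = (t^2 - 2 * \<sigma>)^2 - t^2 * (d * u^2)"
    unfolding T_def U_def by (simp add: power_mult_distrib algebra_simps)
  also have "\<dots> = 4"
    unfolding \<sigma>(1) using \<sigma>(2) by (simp add: power2_eq_square algebra_simps)
  finally have norm: "T^2 - d * U^2 = 4" .
  have parity: "even T \<and> even U" if "even d"
  proof -
    have "t^2 = d * u^2 + 2 * (2 * \<sigma>)"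
      using \<sigma>(1) by simp
    then have "even (t^2)"
      using \<open>even d\<close> by simp
    then show ?thesis
      unfolding T_def U_def by simp
  qed
  have "((of_int t + of_int u * sqrt (of_int d)) / 2)^2
          = (of_int (t * t + d * u * u) + of_int (t * u + t * u) * sqrt (of_int d)) / 4"
    using mult_int_plus_root[of "sqrt (of_int d)" d t u t u] assms(1)
    by (simp add: power2_eq_square)
  also have "t * t + d * u * u = 2 * T"
    using \<sigma>(1) unfolding T_def by (simp add: power2_eq_square algebra_simps)
  also have "t * u + t * u = 2 * U"
    unfolding U_def by simp
  finally show ?thesis
    unfolding half_unit_def using norm parity by (intro exI[of _ T] exI[of _ U]) simp
qed

lemma half_unit_unit_even_power:
  fixes d t u :: int
  assumes "d \<ge> 0" "t^2 - d * u^2 = 4 \<or> t^2 - d * u^2 = -4"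
  shows "half_unit d (((of_int t + of_int u * sqrt (of_int d)) / 2) powi (2 * k))"
  using half_unit_power_int[OF assms(1) half_unit_unit_square[OF assms], of k]
  by (simp add: power_int_mult)

lemma times_half_unit_coeffs:
  fixes a c d x y :: int
  assumes "d > 0" "\<nexists>r::int. d = r^2" "half_unit d z"
    and "of_int x + of_int y * sqrt (of_int d) = (of_int a + of_int c * sqrt (of_int d)) * z"
  obtains T U where "T^2 - d * U^2 = 4" "even d \<Longrightarrow> even T \<and> even U"
    "2 * x = T * a + U * d * c" "2 * y = U * a + T * c"
proof -
  obtain T U where norm: "T^2 - d * U^2 = 4" and parity: "even d \<longrightarrow> even T \<and> even U"
    and z: "z = (of_int T + of_int U * sqrt (of_int d)) / 2"
    using assms(3) unfolding half_unit_def by blast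
  have "of_int (2 * x) + of_int (2 * y) * sqrt (of_int d)
          = (of_int a + of_int c * sqrt (of_int d)) * (of_int T + of_int U * sqrt (of_int d))"
    using assms(4) unfolding z by (simp add: algebra_simps)
  also have "\<dots> = of_int (T * a + U * d * c) + of_int (U * a + T * c) * sqrt (of_int d)"
    using mult_int_plus_root[of "sqrt (of_int d)" d a c T U] assms(1) by (simp add: algebra_simps)
  finally show ?thesis
    using that norm parity int_plus_sqrt_nonsquare_eq_iff[OF assms(1,2)] by blast
qed

lemma gcd_squares_dvd_of_linear:
  fixes a c d x y T U l :: int
  assumes "l * a = T * x - U * d * y" "l * c = T * y - U * x"
  shows "gcd (x^2) (d * y^2) dvd l^2 * gcd (a^2) (d * c^2)"
proof -
  define D where "D = gcd (x^2) (d * y^2)"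
  have Dx: "D dvd x^2" and Dy: "D dvd d * y^2"
    unfolding D_def by simp_all
  have "D^2 dvd x^2 * (d * y^2)"
    unfolding power2_eq_square[of D] using Dx Dy by (rule mult_dvd_mono)
  also have "x^2 * (d * y^2) dvd (d * x * y)^2"
    by (simp add: power2_eq_square)
  finally have Dxy: "D dvd d * x * y"
    by simp
  have "(l * a)^2 = T^2 * x^2 - 2 * T * U * (d * x * y) + U^2 * d * (d * y^2)"
    unfolding assms(1) by (simp add: power2_eq_square algebra_simps)
  also have "D dvd \<dots>"
    by (intro dvd_add dvd_diff dvd_mult[OF Dx] dvd_mult[OF Dy] dvd_mult[OF Dxy])
  finally have Da: "D dvd l^2 * a^2"
    by (simp add: power_mult_distrib)
  have "d * (l * c)^2 = T^2 * (d * y^2) - 2 * T * U * (d * x * y) + d * U^2 * x^2"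
    unfolding assms(2) by (simp add: power2_eq_square algebra_simps)
  also have "D dvd \<dots>"
    by (intro dvd_add dvd_diff dvd_mult[OF Dx] dvd_mult[OF Dy] dvd_mult[OF Dxy])
  finally have "D dvd l^2 * (d * c^2)"
    by (simp add: power_mult_distrib mult.left_commute)
  with Da have "D dvd gcd (l^2 * a^2) (l^2 * (d * c^2))"
    by simp
  then show ?thesis
    unfolding D_def gcd_mult_left by (simp add: abs_mult)
qed

lemma gcd_squares_mutual_dvd:
  fixes a c d x y T U l :: int
  assumes "l * x = T * a + U * d * c" "l * y = U * a + T * c" "T^2 - d * U^2 = l^2" "l \<noteq> 0"
  shows "gcd (a^2) (d * c^2) dvd l^2 * gcd (x^2) (d * y^2)"
    and "gcd (x^2) (d * y^2) dvd l^2 * gcd (a^2) (d * c^2)"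
proof -
  show "gcd (a^2) (d * c^2) dvd l^2 * gcd (x^2) (d * y^2)"
    using assms(1,2) by (intro gcd_squares_dvd_of_linear[of l x T a "- U" d c y]) (simp_all add: algebra_simps)
  have "l * (T * x - U * d * y) = T * (l * x) - U * d * (l * y)"
    by (simp add: algebra_simps)
  also have "\<dots> = (T^2 - d * U^2) * a"
    unfolding assms(1,2) by (simp add: power2_eq_square algebra_simps)
  finally have a: "l * (T * x - U * d * y) = l * (l * a)"
    unfolding assms(3) by (simp add: power2_eq_square)
  have "l * (T * y - U * x) = T * (l * y) - U * (l * x)"
    by (simp add: algebra_simps)
  also have "\<dots> = (T^2 - d * U^2) * c"
    unfolding assms(1,2) by (simp add: power2_eq_square algebra_simps)
  finally have c: "l * (T * y - U * x) = l * (l * c)"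
    unfolding assms(3) by (simp add: power2_eq_square)
  from a c have "l * a = T * x - U * d * y" "l * c = T * y - U * x"
    using assms(4) by simp_all
  then show "gcd (x^2) (d * y^2) dvd l^2 * gcd (a^2) (d * c^2)"
    by (rule gcd_squares_dvd_of_linear)
qed

lemma norm_times_half_unit:
  fixes a c d x y T U :: int
  assumes "T^2 - d * U^2 = 4" "2 * x = T * a + U * d * c" "2 * y = U * a + T * c"
  shows "x^2 - d * y^2 = a^2 - d * c^2"
proof -
  have "4 * (x^2 - d * y^2) = (2 * x)^2 - d * (2 * y)^2"
    by (simp add: power2_eq_square)
  also have "\<dots> = (T^2 - d * U^2) * (a^2 - d * c^2)"
    unfolding assms(2,3) by (simp add: power2_eq_square algebra_simps)
  finally show ?thesis
    unfolding assms(1) by simp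
qed

lemma gcd_squares_half_unit:
  fixes a c d x y T U :: int
  assumes "coprime a c" "T^2 - d * U^2 = 4" "even d \<Longrightarrow> even T \<and> even U"
    and "2 * x = T * a + U * d * c" "2 * y = U * a + T * c"
  shows "gcd (a^2) (d * c^2) dvd gcd (x^2) (d * y^2)"
    and "gcd (x^2) (d * y^2) dvd 4 * gcd (a^2) (d * c^2)"
proof -
  define D E where "D = gcd (x^2) (d * y^2)" and "E = gcd (a^2) (d * c^2)"
  have "E dvd D \<and> D dvd 4 * E"
  proof (cases "even d")
    case True
    then obtain T' U' where T': "T = 2 * T'" and U': "U = 2 * U'"
      using assms(3) by (meson evenE)
    have "1 * x = T' * a + U' * d * c" "1 * y = U' * a + T' * c"
      using assms(4,5) unfolding T' U' by (simp_all add: algebra_simps)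
    moreover have "T'^2 - d * U'^2 = 1^2"
      using assms(2) unfolding T' U' by (simp add: power2_eq_square algebra_simps)
    ultimately have "E dvd D" "D dvd E"
      unfolding D_def E_def using gcd_squares_mutual_dvd[of 1] by simp_all
    then show ?thesis
      by simp
  next
    case False
    have "odd E"
    proof
      assume "even E"
      then have "even a" "even (d * c^2)"
        unfolding E_def by (auto intro: dvd_trans)
      moreover have "odd c"
        using coprime_common_divisor[OF assms(1) \<open>even a\<close>] by fastforce
      ultimately show False
        using False by simp
    qed
    have "E dvd 2^2 * D" "D dvd 2^2 * E"
      unfolding D_def E_def using gcd_squares_mutual_dvd[of 2] assms(2,4,5) by simp_all
    moreover have "coprime E (2^2)"
      using \<open>odd E\<close> by (simp only: coprime_power_right_iff coprime_right_2_iff_odd) simp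
    ultimately show ?thesis
      by (simp add: coprime_dvd_mult_right_iff)
  qed
  then show "E dvd D" "D dvd 4 * E"
    by simp_all
qed

lemma gcd_square_squarefree:
  fixes x s t :: int
  assumes "squarefree t"
  shows "(gcd x s)^2 * gcd (x div gcd x s) t = gcd (x^2) (t * s^2)"
proof (cases "x = 0 \<or> s = 0")
  case True
  show ?thesis
  proof (cases "x = 0")
    case False
    with True have "s = 0"
      by simp
    have "sgn x * \<bar>x\<bar> div \<bar>x\<bar> = sgn x"
      using False by simp
    then have "x div gcd x s = sgn x"
      using \<open>s = 0\<close> by (simp add: sgn_mult_abs)
    then show ?thesis
      using \<open>s = 0\<close> False by (simp add: sgn_if power2_eq_square)
  qed (simp add: abs_mult)
next
  case False
  define h where "h = gcd x s"
  define x' where "x' = x div h"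
  have t: "t \<noteq> 0"
    using assms by auto
  have "x = h * x'"
    unfolding x'_def h_def by simp
  then have x: "x = h * x'" "x' \<noteq> 0" "h \<noteq> 0"
    using False by auto
  have "normalize (h^2 * gcd x' t) = normalize (gcd (x^2) (t * s^2))"
  proof (rule multiplicity_eq_imp_eq)
    fix p :: int
    assume p: "prime p"
    then have "prime_elem p"
      by (rule prime_imp_prime_elem)
    have t1: "multiplicity p t \<le> 1"
      using assms t p squarefree_factorial_semiring'' by blast
    have h: "multiplicity p h = min (multiplicity p x) (multiplicity p s)"
      unfolding h_def using False p by (simp add: multiplicity_gcd)
    have x': "multiplicity p x' = multiplicity p x - multiplicity p h"
      using x \<open>prime_elem p\<close> by (simp add: prime_elem_multiplicity_mult_distrib)
    have "multiplicity p (h^2 * gcd x' t) = 2 * multiplicity p h + min (multiplicity p x') (multiplicity p t)"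
      using x t p \<open>prime_elem p\<close>
      by (simp add: multiplicity_gcd prime_elem_multiplicity_mult_distrib prime_elem_multiplicity_power_distrib)
    moreover have "multiplicity p (gcd (x^2) (t * s^2))
        = min (2 * multiplicity p x) (multiplicity p t + 2 * multiplicity p s)"
      using False t p \<open>prime_elem p\<close>
      by (simp add: multiplicity_gcd prime_elem_multiplicity_mult_distrib prime_elem_multiplicity_power_distrib)
    ultimately show "multiplicity p (h^2 * gcd x' t) = multiplicity p (gcd (x^2) (t * s^2))"
      using t1 unfolding x' h by (cases "multiplicity p x \<le> multiplicity p s") (auto simp: min_def)
  qed (use False x t in auto)
  then show ?thesis
    unfolding h_def x'_def by simp
qed

lemma squarefree_square_cofactor_unique:
  fixes c c' s s' :: int
  assumes "squarefree c" "squarefree c'" "c * s^2 = c' * s'^2" "s \<noteq> 0"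
  shows "c = c'"
proof -
  obtain m m' where m: "s = gcd s s' * m" "s' = gcd s s' * m'" "coprime m m'"
    using gcd_coprime_exists[of s s'] assms(4) by (auto simp: mult.commute)
  have "(gcd s s')^2 * (c * m^2) = (gcd s s')^2 * (c' * m'^2)"
    using assms(3) m(1,2) by (metis mult.left_commute power_mult_distrib)
  then have eq: "c * m^2 = c' * m'^2"
    using assms(4) by simp
  have coprime: "coprime (m^2) (m'^2)"
    using m(3) by simp
  have "m^2 dvd c'"
    using eq coprime by (metis coprime_dvd_mult_left_iff dvd_triv_right)
  then have "is_unit m"
    using assms(2) squarefreeD by blast
  moreover have "m'^2 dvd c"
    using eq coprime by (metis coprime_commute coprime_dvd_mult_left_iff dvd_triv_right)
  then have "is_unit m'"
    using assms(1) squarefreeD by blast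
  ultimately have "m^2 = 1" "m'^2 = 1"
    by (auto simp: power2_eq_1_iff)
  then show ?thesis
    using eq by simp
qed

lemma squarefree_core:
  assumes "n \<noteq> 0"
  shows "squarefree (core n)"
proof -
  have "\<exists>!c. squarefree c \<and> (\<exists>s. n = c * s^2)"
  proof (rule ex1I)
    show "squarefree (squarefree_part n) \<and> (\<exists>s. n = squarefree_part n * s^2)"
      using squarefree_decompose[of n] by blast
  next
    fix c
    assume c: "squarefree c \<and> (\<exists>s. n = c * s^2)"
    then obtain s where "n = c * s^2"
      by blast
    moreover have "s \<noteq> 0"
      using \<open>n = c * s^2\<close> assms by auto
    ultimately show "c = squarefree_part n"
      using c squarefree_decompose[of n]
      by (intro squarefree_square_cofactor_unique[of c _ s "square_part n"]) auto
  qed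
  then show ?thesis
    unfolding core_def by (rule theI'[THEN conjunct1])
qed

lemma g3_of_cases: "g3_of t' u1 u2 \<in> {1, 2, 4}"
  unfolding g3_of_def by simp

lemma g_of_square:
  "(g_of t' u1 u2)^2 = of_int ((g1_of u1 u2)^2 * g2_of t' u1 u2) / of_int (g3_of t' u1 u2)"
proof -
  have "g2_of t' u1 u2 \<ge> 0" "g3_of t' u1 u2 > 0"
    using g3_of_cases[of t' u1 u2] unfolding g2_of_def by auto
  then show ?thesis
    unfolding g_of_def by (simp add: power_mult_distrib)
qed

lemma g_of_square_double:
  fixes t' x s u2 :: int
  assumes "squarefree t'" "u2 = 2 * s \<or> u2 = - 2 * s"
  shows "(g_of t' (2 * x) u2)^2 = of_int (4 * gcd (x^2) (t' * s^2)) / of_int (g3_of t' (2 * x) u2)"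
proof -
  have "gcd (2 * x) (2 * s) = 2 * gcd x s"
    unfolding gcd_mult_left by simp
  then have g1: "g1_of (2 * x) u2 = 2 * gcd x s"
    using assms(2) unfolding g1_of_def by auto
  have "g2_of t' (2 * x) u2 = gcd (x div gcd x s) t'"
    unfolding g2_of_def g1 by (cases "gcd x s = 0") simp_all
  then show ?thesis
    unfolding g_of_square g1 gcd_square_squarefree[OF assms(1), symmetric]
    by (simp add: power_mult_distrib)
qed

lemma power_of_two_if_dvd_power_of_two:
  fixes n :: int
  assumes "n > 0" "n dvd 2^k"
  shows "\<exists>m::nat. n = 2^m"
proof -
  obtain m where "normalize n = 2^m"
    using divides_primepow[OF _ assms(2)] by auto
  then show ?thesis
    using assms(1) by auto
qed

lemma power_of_two_quotient:
  fixes D E g :: int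
  assumes "E > 0" "D \<ge> 0" "E dvd D" "D dvd 4 * E" "g dvd 4" "g > 0"
  shows "\<exists>m::nat. of_int (4 * D) / of_int g / of_int E = (2::real)^m"
proof -
  obtain q r where q: "D = E * q" and r: "4 = g * r"
    using assms(3,5) by blast
  have "q dvd 4"
    using assms(1,4) unfolding q by simp
  moreover have "r dvd 4"
    unfolding r by simp
  ultimately have "r * q dvd 2^4"
    using mult_dvd_mono[of r 4 q 4] by simp
  moreover have "r > 0"
    using assms(6) r zero_less_mult_pos[of g r] by simp
  moreover have "q > 0"
    using assms(1,2,4) q by (cases "q = 0") (auto simp: zero_le_mult_iff)
  ultimately obtain m :: nat where "r * q = 2^m"
    using power_of_two_if_dvd_power_of_two by (meson mult_pos_pos)
  moreover have "of_int (4 * D) / of_int g / of_int E = (of_int (r * q) :: real)"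
    using assms(1,6) unfolding q r by (simp add: field_simps)
  ultimately show ?thesis
    by (metis of_int_numeral of_int_power)
qed

theorem lemma3p11:
  fixes a b d t u k x y :: int
  assumes "a > 0" "b > 0" "d > 0"
    and "\<not> (\<exists>r::int. d = r^2)"
    and "t > 0" "u > 0"
    and "t^2 - d * u^2 = 4 \<or> t^2 - d * u^2 = -4"
    and "real_of_int x + real_of_int y * sqrt (real_of_int d) =
         (real_of_int a + real_of_int (b^2) * sqrt (real_of_int d)) *
         ((real_of_int t + real_of_int u * sqrt (real_of_int d)) / 2) powi (2 * k)"
    and "k \<noteq> 0"
    and "gcd a b = 1"
    and "a^2 - b^4 * d < 0"
    and "s \<ge> 0" "(a^2 - b^4 * d) = core (a^2 - b^4 * d) * s^2"
    and "u2 = 2 * s \<or> u2 = -2 * s"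
  shows "\<exists>m::nat. (g_of (core (a^2 - b^4 * d)) (2 * x) u2)^2
                    / real_of_int (gcd (a^2) (d * b^4)) = 2 ^ m"
proof -
  obtain T U where TU: "T^2 - d * U^2 = 4" "even d \<Longrightarrow> even T \<and> even U"
    "2 * x = T * a + U * d * b^2" "2 * y = U * a + T * b^2"
    using times_half_unit_coeffs[OF assms(3,4) half_unit_unit_even_power assms(8)] assms(3,7) by auto
  have "coprime a (b^2)"
    using assms(10) by (simp flip: coprime_iff_gcd_eq_1)
  note gcds = gcd_squares_half_unit[OF this TU]
  have N: "a^2 - b^4 * d = x^2 - d * y^2"
    using norm_times_half_unit[OF TU(1,3,4)] by (simp flip: power_mult add: mult.commute)
  define t' where "t' = core (a^2 - b^4 * d)"
  have "gcd (x^2) (t' * s^2) = gcd (x^2) (d * y^2)"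
    using assms(13) N unfolding t'_def by (metis gcd.commute gcd_diff2)
  moreover have "squarefree t'"
    unfolding t'_def using assms(11) by (intro squarefree_core) simp
  ultimately have g: "(g_of t' (2 * x) u2)^2
      = of_int (4 * gcd (x^2) (d * y^2)) / of_int (g3_of t' (2 * x) u2)"
    using g_of_square_double[OF _ assms(14)] by simp
  have "g3_of t' (2 * x) u2 dvd 4" "g3_of t' (2 * x) u2 > 0"
    using g3_of_cases[of t' "2 * x" u2] by auto
  moreover have "gcd (a^2) (d * (b^2)^2) > 0"
    using assms(1) by simp
  ultimately obtain m :: nat where "of_int (4 * gcd (x^2) (d * y^2)) / of_int (g3_of t' (2 * x) u2)
      / of_int (gcd (a^2) (d * (b^2)^2)) = (2::real)^m"
    using power_of_two_quotient[OF _ _ gcds] by fastforce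
  then show ?thesis
    unfolding t'_def[symmetric] g by (simp flip: power_mult)
qed

end
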